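(* Fix a sequence of matchings $\mathcal{M}=\langle \mathbf{M}^{(1)}, \mathbf{M}^{(2)}, \ldots \rangle$ of a graph $G$ with $n$ nodes and consider the discrete protocol with these matchings. For any non-negative integers $K,\alpha,t$ with $1 \leq \alpha \leq K$, \[ \max_{ y \in \mathbb{Z}^n ,\ \operatorname{disc}(y) \leq K} \Pr\left[ x_{\max}^{(t)} \geq \lfloor \overline{x} \rfloor + \alpha \,\Big|\, x^{(0)} = y \right] \leq \max_{ y \in \mathbb{Z}^n,\ \operatorname{disc}(y) \leq K} \Pr\left[x_{\min}^{(t)} \leq \lfloor \overline{x} \rfloor - \alpha + 3 \,\Big|\, x^{(0)} = y \right], \] and similarly \[ \max_{ y \in \mathbb{Z}^n,\ \operatorname{disc}(y) \leq K} \Pr\left[ x_{\min}^{(t)} \leq \lfloor \overline{x} \rfloor - \alpha \,\Big|\, x^{(0)} = y \right] \leq \max_{ y \in \mathbb{Z}^n,\ \operatorname{disc}(y) \leq K} \Pr\left[x_{\max}^{(t)} \geq \lfloor \overline{x} \rfloor + \alpha - 3 \,\Big|\, x^{(0)} = y \right]. \]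
   Context: Discrete protocol with random orientation: $x^{(t)}\in\mathbb{Z}^n$ is the load vector at the end of round $t$; in round $t$, for each $\{u,v\}\in\mathbf{M}^{(t)}$ both $u,v$ get $\lfloor (x^{(t-1)}_u+x^{(t-1)}_v)/2\rfloor$ tokens and the excess token (if the sum is odd) goes to $u$ or $v$ with probability $1/2$ each, independently over edges and rounds; unmatched nodes keep their load. $\overline{x}=\frac1n\sum_w x^{(0)}_w$ is the average load (of the initial vector $y$), $x^{(t)}_{\max}=\max_u x^{(t)}_u$, $x^{(t)}_{\min}=\min_u x^{(t)}_u$, and $\operatorname{disc}(y)=\max_{u,v}|y_u-y_v|$. The probability is over the random orientations. *)

theory Defs
  imports "HOL-Probability.Probability"
begin

text \<open>Nodes are 0..<n. Loads are functions nat => int (only values at nodes < n matter).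
A matching is a set of edges, each edge being a 2-element set of nodes.\<close>

definition is_graph :: "nat \<Rightarrow> nat set set \<Rightarrow> bool" where
  "is_graph n E \<longleftrightarrow> (\<forall>e\<in>E. card e = 2 \<and> e \<subseteq> {..<n})"

definition is_matching :: "nat set set \<Rightarrow> nat set set \<Rightarrow> bool" where
  "is_matching E M \<longleftrightarrow> M \<subseteq> E \<and> (\<forall>e\<in>M. \<forall>e'\<in>M. e \<noteq> e' \<longrightarrow> e \<inter> e' = {})"

text \<open>One round of the discrete protocol, given the orientation r: for each matched edge e,
r e is the endpoint of e that receives the excess token (if any).\<close>
definition step :: "nat set set \<Rightarrow> (nat \<Rightarrow> int) \<Rightarrow> (nat set \<Rightarrow> nat) \<Rightarrow> (nat \<Rightarrow> int)" where
  "step M x r = (\<lambda>w. if \<exists>e\<in>M. w \<in> e then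
      (let e = (THE e. e \<in> M \<and> w \<in> e); s = (\<Sum>u\<in>e. x u)
       in s div 2 + (if odd s \<and> r e = w then 1 else 0))
    else x w)"

definition orientation :: "nat set set \<Rightarrow> (nat set \<Rightarrow> nat) pmf" where
  "orientation M = Pi_pmf M undefined (\<lambda>e. pmf_of_set e)"

text \<open>Distribution of the load vector x^(t) at the end of round t, given x^(0) = y;
round t uses matching Ms t (t = 1, 2, ...).\<close>
primrec protocol :: "(nat \<Rightarrow> nat set set) \<Rightarrow> (nat \<Rightarrow> int) \<Rightarrow> nat \<Rightarrow> (nat \<Rightarrow> int) pmf" where
  "protocol Ms y 0 = return_pmf y"
| "protocol Ms y (Suc t) =
     bind_pmf (protocol Ms y t) (\<lambda>x. map_pmf (step (Ms (Suc t)) x) (orientation (Ms (Suc t))))"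

definition xmax :: "nat \<Rightarrow> (nat \<Rightarrow> int) \<Rightarrow> int" where
  "xmax n x = Max (x ` {..<n})"

definition xmin :: "nat \<Rightarrow> (nat \<Rightarrow> int) \<Rightarrow> int" where
  "xmin n x = Min (x ` {..<n})"

definition avg :: "nat \<Rightarrow> (nat \<Rightarrow> int) \<Rightarrow> real" where
  "avg n y = (\<Sum>w<n. real_of_int (y w)) / real n"

definition disc :: "nat \<Rightarrow> (nat \<Rightarrow> int) \<Rightarrow> int" where
  "disc n y = Max {\<bar>y u - y v\<bar> | u v. u < n \<and> v < n}"

end

theory Submission
  imports Defs
begin

text \<open>Negating all loads and, on every matched edge, handing the excess token to the other
endpoint turns a run of the protocol from \<open>y\<close> into a run from \<open>-y\<close>. Since the flipped
orientation is again uniformly distributed, the load vector after \<open>t\<close> rounds from \<open>-y\<close> is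
distributed as the negated load vector from \<open>y\<close>. Negation swaps maximum and minimum,
preserves the discrepancy and turns \<open>\<lfloor>avg\<rfloor>\<close> into \<open>-\<lceil>avg\<rceil> \<ge> -\<lfloor>avg\<rfloor> - 1\<close>, so each
maximum event at \<open>y\<close> is contained in the corresponding minimum event at \<open>-y\<close>, and vice
versa, up to a slack of one.\<close>

definition other_end :: "'a set \<Rightarrow> 'a \<Rightarrow> 'a" where
  "other_end e v = the_elem (e - {v})"

lemma
  assumes "card e = 2" "v \<in> e"
  shows other_end_in: "other_end e v \<in> e"
    and other_end_neq: "other_end e v \<noteq> v"
    and other_end_other_end: "other_end e (other_end e v) = v"
    and card_2_mem_cases: "w \<in> e \<Longrightarrow> w = v \<or> w = other_end e v"
proof -
  obtain a b where e: "e = {a, b}" "a \<noteq> b"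
    using assms(1) by (meson card_2_iff)
  have ends: "other_end e a = b" "other_end e b = a"
    using e by (auto simp: other_end_def insert_Diff_if)
  have "v = a \<or> v = b"
    using assms(2) e(1) by blast
  then show "other_end e v \<in> e" "other_end e v \<noteq> v" "other_end e (other_end e v) = v"
    "w \<in> e \<Longrightarrow> w = v \<or> w = other_end e v"
    using e ends by auto
qed

definition flip_orientation :: "nat set set \<Rightarrow> (nat set \<Rightarrow> nat) \<Rightarrow> nat set \<Rightarrow> nat" where
  "flip_orientation M r =
     (\<lambda>e. if e \<in> M \<and> r e \<in> e then other_end e (r e) else r e)"

lemma flip_orientation_in_iff:
  assumes "\<And>e. e \<in> M \<Longrightarrow> card e = 2" "e \<in> M"
  shows "flip_orientation M r e \<in> e \<longleftrightarrow> r e \<in> e"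
  using assms other_end_in[of e "r e"] by (auto simp: flip_orientation_def)

lemma flip_orientation_flip_orientation:
  assumes "\<And>e. e \<in> M \<Longrightarrow> card e = 2"
  shows "flip_orientation M (flip_orientation M r) = r"
  using assms other_end_in other_end_other_end
  by (fastforce simp: flip_orientation_def)

lemma orientation_flip_orientation:
  assumes fin: "finite M" and edges: "\<And>e. e \<in> M \<Longrightarrow> card e = 2"
  shows "map_pmf (flip_orientation M) (orientation M) = orientation M"
proof (rule pmf_eqI)
  fix r
  let ?f = "flip_orientation M"
  have invol: "\<And>r. ?f (?f r) = r"
    by (rule flip_orientation_flip_orientation[OF edges])
  have "inj ?f"
    by (metis invol injI)
  then have "pmf (map_pmf ?f (orientation M)) (?f (?f r)) = pmf (orientation M) (?f r)"
    by (rule pmf_map_inj')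
  also have "\<dots> = pmf (orientation M) r"
  proof -
    have outside: "(\<forall>e. e \<notin> M \<longrightarrow> ?f r e = undefined) \<longleftrightarrow> (\<forall>e. e \<notin> M \<longrightarrow> r e = undefined)"
      by (auto simp: flip_orientation_def)
    have "pmf (pmf_of_set e) (?f r e) = pmf (pmf_of_set e) (r e)" if "e \<in> M" for e
    proof -
      have "finite e" "e \<noteq> {}"
        using edges[OF that] by (auto intro: card_ge_0_finite)
      then show ?thesis
        using flip_orientation_in_iff[OF edges that] by (simp add: indicator_def)
    qed
    then have prod: "(\<Prod>e\<in>M. pmf (pmf_of_set e) (?f r e)) = (\<Prod>e\<in>M. pmf (pmf_of_set e) (r e))"
      by (rule prod.cong[OF refl])
    show ?thesis
      unfolding orientation_def pmf_Pi[OF fin] outside prod ..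
  qed
  finally show "pmf (map_pmf ?f (orientation M)) r = pmf (orientation M) r"
    by (simp only: invol)
qed

lemma orientation_in_edge:
  assumes "finite M" "\<And>e. e \<in> M \<Longrightarrow> card e = 2"
    and "r \<in> set_pmf (orientation M)" "e \<in> M"
  shows "r e \<in> e"
proof -
  have "finite e" "e \<noteq> {}"
    using assms(2)[OF assms(4)] by (auto intro: card_ge_0_finite)
  moreover have "r e \<in> set_pmf (pmf_of_set e)"
    using set_Pi_pmf_subset'[OF assms(1), of undefined pmf_of_set] assms(3,4)
    by (auto simp: orientation_def PiE_dflt_def)
  ultimately show ?thesis
    by simp
qed

lemma uminus_div_2:
  fixes s :: int
  shows "(- s) div 2 = - (s div 2) - (if odd s then 1 else 0)"
  by presburger

lemma step_uminus:
  assumes edges: "\<And>e. e \<in> M \<Longrightarrow> card e = 2"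
    and disjoint: "\<And>e e'. e \<in> M \<Longrightarrow> e' \<in> M \<Longrightarrow> e \<noteq> e' \<Longrightarrow> e \<inter> e' = {}"
    and oriented: "\<And>e. e \<in> M \<Longrightarrow> r e \<in> e"
  shows "step M (- x) (flip_orientation M r) = - step M x r"
proof
  fix w
  show "step M (- x) (flip_orientation M r) w = (- step M x r) w"
  proof (cases "\<exists>e\<in>M. w \<in> e")
    case False
    then show ?thesis
      by (simp add: step_def)
  next
    case True
    then obtain e where e: "e \<in> M" "w \<in> e"
      by blast
    have the_edge: "(THE e. e \<in> M \<and> w \<in> e) = e"
      using e disjoint by (intro the_equality) auto
    define s where "s = (\<Sum>u\<in>e. x u)"
    have flip: "flip_orientation M r e = other_end e (r e)"
      using e oriented by (simp add: flip_orientation_def)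
    have one_receiver: "other_end e (r e) = w \<longleftrightarrow> r e \<noteq> w"
      using card_2_mem_cases[of e "r e" w] other_end_neq[of e "r e"] edges e oriented by blast
    have "step M (- x) (flip_orientation M r) w
        = (- s) div 2 + (if odd s \<and> other_end e (r e) = w then 1 else 0)"
      using True by (simp add: step_def the_edge flip Let_def sum_negf s_def)
    moreover have "step M x r w = s div 2 + (if odd s \<and> r e = w then 1 else 0)"
      using True by (simp add: step_def the_edge Let_def s_def)
    ultimately show ?thesis
      \<comment> \<open>for odd \<open>s\<close> rounding \<open>-s\<close> down costs one token, which the flipped orientation gives back\<close>
      using one_receiver uminus_div_2[of s] by auto
  qed
qed

lemma protocol_uminus:
  assumes "is_graph n E" "\<And>s. s \<ge> 1 \<Longrightarrow> is_matching E (Ms s)"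
  shows "protocol Ms (- y) t = map_pmf uminus (protocol Ms y t)"
proof (induction t)
  case 0
  show ?case
    by simp
next
  case (Suc t)
  define M where "M = Ms (Suc t)"
  have matching: "is_matching E M"
    using assms(2) by (simp add: M_def)
  have edges: "\<And>e. e \<in> M \<Longrightarrow> card e = 2"
    and disjoint: "\<And>e e'. e \<in> M \<Longrightarrow> e' \<in> M \<Longrightarrow> e \<noteq> e' \<Longrightarrow> e \<inter> e' = {}"
    using matching assms(1) by (auto simp: is_matching_def is_graph_def)
  have "M \<subseteq> Pow {..<n}"
    using matching assms(1) by (auto simp: is_matching_def is_graph_def)
  then have fin: "finite M"
    by (rule finite_subset) simp
  let ?O = "orientation M"
  have "protocol Ms (- y) (Suc t) = bind_pmf (protocol Ms y t) (\<lambda>x. map_pmf (step M (- x)) ?O)"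
    by (simp only: protocol.simps M_def Suc.IH bind_map_pmf)
  also have "\<dots> = bind_pmf (protocol Ms y t)
      (\<lambda>x. map_pmf (step M (- x)) (map_pmf (flip_orientation M) ?O))"
    by (simp only: orientation_flip_orientation[OF fin edges])
  also have "\<dots> = bind_pmf (protocol Ms y t) (\<lambda>x. map_pmf uminus (map_pmf (step M x) ?O))"
    unfolding pmf.map_comp
    by (intro bind_pmf_cong refl map_pmf_cong)
       (simp add: step_uminus[OF edges disjoint] orientation_in_edge[OF fin edges])
  also have "\<dots> = map_pmf uminus (protocol Ms y (Suc t))"
    by (simp add: M_def map_bind_pmf)
  finally show ?case .
qed

lemma
  assumes "n \<ge> 1"
  shows xmax_uminus: "xmax n (- x) = - xmin n x"
    and xmin_uminus: "xmin n (- x) = - xmax n x"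
proof -
  have image: "(- x) ` {..<n} = uminus ` x ` {..<n}"
    by auto
  have "0 \<in> {..<n}"
    using assms by simp
  then have "finite (x ` {..<n})" "x ` {..<n} \<noteq> {}"
    by auto
  then show "xmax n (- x) = - xmin n x" "xmin n (- x) = - xmax n x"
    unfolding xmax_def xmin_def image
    by simp_all
qed

lemma avg_uminus: "avg n (- y) = - avg n y"
  by (simp add: avg_def sum_negf)

lemma disc_uminus: "disc n (- y) = disc n y"
  by (simp add: disc_def abs_minus_commute)

lemma prob_protocol_uminus:
  assumes "is_graph n E" "\<And>s. s \<ge> 1 \<Longrightarrow> is_matching E (Ms s)"
  shows "measure_pmf.prob (protocol Ms (- y) t) {x. P x}
       = measure_pmf.prob (protocol Ms y t) {x. P (- x)}"
  by (simp add: protocol_uminus[OF assms] vimage_def)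

lemma prob_xmax_ge_le_prob_xmin_le_uminus:
  assumes "n \<ge> 1" "is_graph n E" "\<And>s. s \<ge> 1 \<Longrightarrow> is_matching E (Ms s)"
  shows "measure_pmf.prob (protocol Ms y t) {x. xmax n x \<ge> \<lfloor>avg n y\<rfloor> + a}
       \<le> measure_pmf.prob (protocol Ms (- y) t) {x. xmin n x \<le> \<lfloor>avg n (- y)\<rfloor> - a + 1}"
  by (auto simp: prob_protocol_uminus[OF assms(2,3)] xmin_uminus[OF assms(1)] avg_uminus
      floor_minus intro!: measure_pmf.finite_measure_mono)
     (use ceiling_diff_floor_le_1[of "avg n y"] in linarith)

lemma prob_xmin_le_le_prob_xmax_ge_uminus:
  assumes "n \<ge> 1" "is_graph n E" "\<And>s. s \<ge> 1 \<Longrightarrow> is_matching E (Ms s)"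
  shows "measure_pmf.prob (protocol Ms y t) {x. xmin n x \<le> \<lfloor>avg n y\<rfloor> - a}
       \<le> measure_pmf.prob (protocol Ms (- y) t) {x. xmax n x \<ge> \<lfloor>avg n (- y)\<rfloor> + a}"
  by (auto simp: prob_protocol_uminus[OF assms(2,3)] xmax_uminus[OF assms(1)] avg_uminus
      floor_minus intro!: measure_pmf.finite_measure_mono)
     (use floor_le_ceiling[of "avg n y"] in linarith)

theorem lemma2p7:
  fixes n :: nat and E :: "nat set set" and Ms :: "nat \<Rightarrow> nat set set"
    and K \<alpha> t :: nat
  assumes "n \<ge> 1"
    and "is_graph n E"
    and "\<And>s. s \<ge> 1 \<Longrightarrow> is_matching E (Ms s)"
    and "1 \<le> \<alpha>" and "\<alpha> \<le> K"
  shows "((SUP y\<in>{y. disc n y \<le> int K}.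
            measure_pmf.prob (protocol Ms y t)
              {x. xmax n x \<ge> \<lfloor>avg n y\<rfloor> + int \<alpha>})
       \<le> (SUP y\<in>{y. disc n y \<le> int K}.
            measure_pmf.prob (protocol Ms y t)
              {x. xmin n x \<le> \<lfloor>avg n y\<rfloor> - int \<alpha> + 3})) \<and>
       ((SUP y\<in>{y. disc n y \<le> int K}.
            measure_pmf.prob (protocol Ms y t)
              {x. xmin n x \<le> \<lfloor>avg n y\<rfloor> - int \<alpha>})
       \<le> (SUP y\<in>{y. disc n y \<le> int K}.
            measure_pmf.prob (protocol Ms y t)
              {x. xmax n x \<ge> \<lfloor>avg n y\<rfloor> + int \<alpha> - 3}))"
proof -
  let ?D = "{y. disc n y \<le> int K}"
  have "disc n (\<lambda>_. 0) = 0"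
    using assms(1) by (auto simp: disc_def intro!: Max_eqI exI[of _ 0])
  then have nonempty: "?D \<noteq> {}"
    by (metis (mono_tags) empty_iff mem_Collect_eq of_nat_0_le_iff)
  have bounded: "bdd_above ((\<lambda>y. measure_pmf.prob (protocol Ms y t) (B y)) ` ?D)" for B
    by (intro bdd_aboveI[where M = 1]) (auto intro: measure_pmf.prob_le_1)
  have "y \<in> ?D \<Longrightarrow> - y \<in> ?D" for y
    by (simp add: disc_uminus)
  moreover have "measure_pmf.prob (protocol Ms (- y) t) {x. xmin n x \<le> \<lfloor>avg n (- y)\<rfloor> - int \<alpha> + 1}
      \<le> measure_pmf.prob (protocol Ms (- y) t) {x. xmin n x \<le> \<lfloor>avg n (- y)\<rfloor> - int \<alpha> + 3}"
    and "measure_pmf.prob (protocol Ms (- y) t) {x. xmax n x \<ge> \<lfloor>avg n (- y)\<rfloor> + int \<alpha>}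
      \<le> measure_pmf.prob (protocol Ms (- y) t) {x. xmax n x \<ge> \<lfloor>avg n (- y)\<rfloor> + int \<alpha> - 3}" for y
    by (auto intro!: measure_pmf.finite_measure_mono)
  ultimately show ?thesis
    using prob_xmax_ge_le_prob_xmin_le_uminus[OF assms(1-3), where t = t and a = "int \<alpha>"]
      prob_xmin_le_le_prob_xmax_ge_uminus[OF assms(1-3), where t = t and a = "int \<alpha>"]
    by (intro conjI cSUP_mono[OF nonempty bounded]) (meson order_trans)+
qed

end
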